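(* Let $\lambda>0$ be the wavelength, let $N\ge 1$ be an integer, and let $\delta=\lambda/2$. For $n\in\{1,\dots,N\}$ let $\bar{x}_n=\left(n-\frac{N+1}{2}\right)\delta$ and $$\mathcal{A}_n=\left\{(x,y,0): |x-\bar{x}_n|\le \tfrac{\delta}{2},\ |y|\le \tfrac{\delta}{2}\right\},$$ and let $A=\delta^2$ denote the area of each $\mathcal{A}_n$. Let $z>0$ and $F>0$ with $z\neq F$, and define $$\hat{G}_{\rm ULA}=\frac{1}{(NA)^2}\left|\sum_{n=1}^N\int_{\mathcal{A}_n} e^{+\mathrm{i}\frac{2\pi}{\lambda}\left(\frac{x^2}{2F}+\frac{y^2}{2F}\right)}\,e^{-\mathrm{i}\frac{2\pi}{\lambda}\left(\frac{x^2}{2z}+\frac{y^2}{2z}\right)}\,dx\,dy\right|^2 .$$ Then, with $z_{\rm eff}=\frac{Fz}{|F-z|}$ and $a=\frac{\lambda}{8z_{\rm eff}}$, $$\hat{G}_{\rm ULA}=\frac{\left(C^2(\sqrt{a})+S^2(\sqrt{a})\right)\left(C^2(\sqrt{a}\,N)+S^2(\sqrt{a}\,N)\right)}{(Na)^2},$$ where $C$ and $S$ are the Fresnel integrals.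
   Context: The Fresnel integrals are $C(u)=\int_0^u\cos\left(\frac{\pi t^2}{2}\right)dt$ and $S(u)=\int_0^u\sin\left(\frac{\pi t^2}{2}\right)dt$. Physically, $\hat{G}_{\rm ULA}$ is the (Fresnel-approximated) normalized array gain of a uniform linear array of $N$ square antennas of side $\delta$ along the $x$-axis, centered at the origin, receiving from a transmitter at $(0,0,z)$ with matched filtering focused at $(0,0,F)$; $\mathrm{i}$ is the imaginary unit. *)

theory Defs
  imports "HOL-Analysis.Analysis"
begin

definition fresnelC :: "real \<Rightarrow> real" where
  "fresnelC u = (if 0 \<le> u then integral {0..u} (\<lambda>t. cos (pi * t\<^sup>2 / 2))
                 else - integral {u..0} (\<lambda>t. cos (pi * t\<^sup>2 / 2)))"

definition fresnelS :: "real \<Rightarrow> real" where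
  "fresnelS u = (if 0 \<le> u then integral {0..u} (\<lambda>t. sin (pi * t\<^sup>2 / 2))
                 else - integral {u..0} (\<lambda>t. sin (pi * t\<^sup>2 / 2)))"

definition ula_antenna :: "real \<Rightarrow> nat \<Rightarrow> nat \<Rightarrow> (real \<times> real) set" where
  "ula_antenna lam N n =
     (let \<delta> = lam / 2; xn = (real n - (real N + 1) / 2) * \<delta>
      in {(x, y). \<bar>x - xn\<bar> \<le> \<delta> / 2 \<and> \<bar>y\<bar> \<le> \<delta> / 2})"

definition G_ULA :: "real \<Rightarrow> nat \<Rightarrow> real \<Rightarrow> real \<Rightarrow> real" where
  "G_ULA lam N z F =
     (let \<delta> = lam / 2; A = \<delta>\<^sup>2 in
      1 / (real N * A)\<^sup>2 *
      (cmod (\<Sum>n = 1..N. integral (ula_antenna lam N n)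
          (\<lambda>(x, y). exp (\<i> * complex_of_real (2 * pi / lam * (x\<^sup>2 / (2 * F) + y\<^sup>2 / (2 * F))))
                  * exp (- \<i> * complex_of_real (2 * pi / lam * (x\<^sup>2 / (2 * z) + y\<^sup>2 / (2 * z)))))))\<^sup>2)"

end

theory Submission
  imports Defs
begin

(* The two phases combine into exp(i c (x^2 + y^2)) = cis (c x^2) * cis (c y^2) with
   c = pi / lam * (1/F - 1/z), so every antenna integral is a product of two one-dimensional
   integrals. The x-ranges of the N antennas tile [-N delta/2, N delta/2], hence the array sum is
   the integral of cis (c x^2) over that interval times the integral of cis (c y^2) over
   [-delta/2, delta/2]. The substitution t = beta x with pi beta^2 / 2 = |c| turns each factor into
   2 (C + i S)(beta L) / beta, up to complex conjugation when c < 0, which leaves the modulus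
   unchanged; finally beta delta / 2 = sqrt a. *)

lemma integral_symmetric_even:
  fixes h :: "real \<Rightarrow> 'a::banach"
  assumes even: "\<And>t. h (- t) = h t" and int: "h integrable_on {0..L}" and "0 \<le> L"
  shows "integral {-L..L} h = 2 *\<^sub>R integral {0..L} h"
proof -
  have right: "(h has_integral integral {0..L} h) {0..L}"
    using int by (rule integrable_integral)
  then have "((\<lambda>t. h (- t)) has_integral integral {0..L} h) {-L..-0}"
    by (simp only: has_integral_reflect_real)
  then have left: "(h has_integral integral {0..L} h) {-L..0}"
    by (simp add: even)
  have "(h has_integral integral {0..L} h + integral {0..L} h) {-L..L}"
    using has_integral_combine[OF _ \<open>0 \<le> L\<close> left right] \<open>0 \<le> L\<close> by simp
  then show ?thesis
    by (simp add: integral_unique scaleR_2)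
qed

lemma integral_Times_mult:
  fixes f g :: "real \<Rightarrow> 'a::{real_normed_field, banach}"
  assumes "continuous_on {a..b} f" and "continuous_on {c..d} g"
  shows "integral ({a..b} \<times> {c..d}) (\<lambda>(x, y). f x * g y) = integral {a..b} f * integral {c..d} g"
proof -
  have box: "cbox (a, c) (b, d) = {a..b} \<times> {c..d}"
    by (simp add: cbox_Pair_eq)
  have "continuous_on (cbox (a, c) (b, d)) (\<lambda>(x, y). f x * g y)"
    unfolding case_prod_beta box using assms
    by (intro continuous_intros continuous_on_compose2[OF assms(1)] continuous_on_compose2[OF assms(2)])
       auto
  from integral_prod_continuous[OF this] show ?thesis
    by (simp add: box)
qed

lemma sum_integral_adjacent_intervals:
  fixes f :: "real \<Rightarrow> 'a::banach"
  assumes "f integrable_on {a..a + real N * \<delta>}" and "0 \<le> \<delta>"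
  shows "(\<Sum>n = 1..N. integral {a + (real n - 1) * \<delta>..a + real n * \<delta>} f) = integral {a..a + real N * \<delta>} f"
  using assms(1)
proof (induction N)
  case 0
  then show ?case by simp
next
  case (Suc N)
  define b where "b = a + real N * \<delta>"
  have b_Suc: "a + real (Suc N) * \<delta> = b + \<delta>"
    unfolding b_def by (simp add: algebra_simps)
  have "a \<le> b"
    unfolding b_def using assms(2) by simp
  have int_Suc: "f integrable_on {a..b + \<delta>}"
    using Suc.prems by (simp only: b_Suc)
  then have "f integrable_on {a..b}"
    by (rule integrable_subinterval_real) (use assms(2) in auto)
  then have "(\<Sum>n = 1..N. integral {a + (real n - 1) * \<delta>..a + real n * \<delta>} f) = integral {a..b} f"
    unfolding b_def by (rule Suc.IH)
  then have "(\<Sum>n = 1..Suc N. integral {a + (real n - 1) * \<delta>..a + real n * \<delta>} f)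
      = integral {a..b} f + integral {b..b + \<delta>} f"
    by (simp add: b_def algebra_simps)
  also have "\<dots> = integral {a..b + \<delta>} f"
    using int_Suc \<open>a \<le> b\<close> assms(2) by (intro Henstock_Kurzweil_Integration.integral_combine) auto
  finally show ?case
    by (simp only: b_Suc)
qed

lemma has_integral_cis_fresnel:
  assumes "0 \<le> u"
  shows "((\<lambda>t. cis (pi * t\<^sup>2 / 2)) has_integral Complex (fresnelC u) (fresnelS u)) {0..u}"
proof -
  define I where "I = integral {0..u} (\<lambda>t. cis (pi * t\<^sup>2 / 2))"
  have I: "((\<lambda>t. cis (pi * t\<^sup>2 / 2)) has_integral I) {0..u}"
    unfolding I_def by (intro integrable_integral integrable_continuous_real continuous_intros) auto
  have "Re I = fresnelC u"
    using integral_unique[OF has_integral_Re[OF I]] assms by (simp add: fresnelC_def)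
  moreover have "Im I = fresnelS u"
    using integral_unique[OF has_integral_Im[OF I]] assms by (simp add: fresnelS_def)
  ultimately have "I = Complex (fresnelC u) (fresnelS u)"
    by (simp add: complex_eq_iff)
  with I show ?thesis
    by simp
qed

lemma has_integral_cis_quadratic_fresnel:
  assumes "0 < \<beta>" and "0 \<le> L"
  shows "((\<lambda>t. cis (pi * \<beta>\<^sup>2 / 2 * t\<^sup>2)) has_integral
           Complex (fresnelC (\<beta> * L)) (fresnelS (\<beta> * L)) / \<beta>) {0..L}"
proof -
  have "((\<lambda>t. cis (pi * t\<^sup>2 / 2)) has_integral Complex (fresnelC (\<beta> * L)) (fresnelS (\<beta> * L))) {0..\<beta> * L}"
    using assms by (intro has_integral_cis_fresnel) simp
  from has_integral_stretch_real[OF this, of \<beta>] assms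
  have "((\<lambda>t. cis (pi * (\<beta> * t)\<^sup>2 / 2)) has_integral
           (1 / \<beta>) *\<^sub>R Complex (fresnelC (\<beta> * L)) (fresnelS (\<beta> * L))) {0..L}"
    by simp
  moreover have "(\<lambda>t. cis (pi * (\<beta> * t)\<^sup>2 / 2)) = (\<lambda>t. cis (pi * \<beta>\<^sup>2 / 2 * t\<^sup>2))"
    by (simp add: power_mult_distrib mult.assoc)
  ultimately show ?thesis
    by (simp add: scaleR_conv_of_real)
qed

lemma norm_integral_cis_quadratic_symmetric:
  assumes "0 < \<beta>" and c: "\<bar>c\<bar> = pi * \<beta>\<^sup>2 / 2" and "0 \<le> L"
  shows "(norm (integral {-L..L} (\<lambda>t. cis (c * t\<^sup>2))))\<^sup>2
           = 4 * ((fresnelC (\<beta> * L))\<^sup>2 + (fresnelS (\<beta> * L))\<^sup>2) / \<beta>\<^sup>2"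
proof -
  define E where "E = Complex (fresnelC (\<beta> * L)) (fresnelS (\<beta> * L))"
  have half: "((\<lambda>t. cis (\<bar>c\<bar> * t\<^sup>2)) has_integral E / \<beta>) {0..L}"
    unfolding E_def c using assms(1,3) by (rule has_integral_cis_quadratic_fresnel)
  have "integral {-L..L} (\<lambda>t. cis (\<bar>c\<bar> * t\<^sup>2)) = 2 *\<^sub>R integral {0..L} (\<lambda>t. cis (\<bar>c\<bar> * t\<^sup>2))"
    using has_integral_integrable[OF half] assms(3) by (intro integral_symmetric_even) auto
  then have abs_c: "integral {-L..L} (\<lambda>t. cis (\<bar>c\<bar> * t\<^sup>2)) = 2 * E / \<beta>"
    using half by (simp add: integral_unique scaleR_conv_of_real)
  have "norm (integral {-L..L} (\<lambda>t. cis (c * t\<^sup>2))) = norm (integral {-L..L} (\<lambda>t. cis (\<bar>c\<bar> * t\<^sup>2)))"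
  proof (cases "0 \<le> c")
    case False
    then have "(\<lambda>t. cis (c * t\<^sup>2)) = (\<lambda>t. cnj (cis (\<bar>c\<bar> * t\<^sup>2)))"
      by (simp add: cis_cnj)
    then show ?thesis
      by (simp flip: integral_cnj)
  qed simp
  also have "\<dots> = 2 * norm E / \<beta>"
    using assms(1) by (simp add: abs_c norm_divide)
  finally show ?thesis
    by (simp add: E_def power_divide cmod_power2 power_mult_distrib)
qed

lemma ula_antenna_eq_Times:
  "ula_antenna lam N n =
     {- (real N * (lam / 2) / 2) + (real n - 1) * (lam / 2)..- (real N * (lam / 2) / 2) + real n * (lam / 2)}
     \<times> {- (lam / 2 / 2)..lam / 2 / 2}"
  unfolding ula_antenna_def Let_def by (auto simp: abs_le_iff field_simps)

lemma focused_phase_eq_cis: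
  "exp (\<i> * complex_of_real (k * (x\<^sup>2 / (2 * F) + y\<^sup>2 / (2 * F))))
     * exp (- \<i> * complex_of_real (k * (x\<^sup>2 / (2 * z) + y\<^sup>2 / (2 * z))))
   = cis (k / 2 * (1 / F - 1 / z) * x\<^sup>2) * cis (k / 2 * (1 / F - 1 / z) * y\<^sup>2)"
proof -
  have "exp (\<i> * complex_of_real (k * (x\<^sup>2 / (2 * F) + y\<^sup>2 / (2 * F))))
     * exp (- \<i> * complex_of_real (k * (x\<^sup>2 / (2 * z) + y\<^sup>2 / (2 * z))))
   = cis (k * (x\<^sup>2 / (2 * F) + y\<^sup>2 / (2 * F))) * cis (- (k * (x\<^sup>2 / (2 * z) + y\<^sup>2 / (2 * z))))"
    by (simp only: cis_conv_exp of_real_minus mult_minus_left mult_minus_right)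
  also have "\<dots> = cis (k / 2 * (1 / F - 1 / z) * x\<^sup>2 + k / 2 * (1 / F - 1 / z) * y\<^sup>2)"
    unfolding cis_mult by (simp add: algebra_simps)
  finally show ?thesis
    by (simp add: cis_mult)
qed

lemma G_ULA_eq_norm_integrals:
  fixes lam z F :: real
  assumes "0 < lam"
  defines "\<delta> \<equiv> lam / 2" and "c \<equiv> pi / lam * (1 / F - 1 / z)"
  shows "G_ULA lam N z F
    = (norm (integral {- (real N * \<delta> / 2)..real N * \<delta> / 2} (\<lambda>t. cis (c * t\<^sup>2))))\<^sup>2
      * (norm (integral {- (\<delta> / 2)..\<delta> / 2} (\<lambda>t. cis (c * t\<^sup>2))))\<^sup>2 / (real N * \<delta>\<^sup>2)\<^sup>2"
proof -
  define f where "f = (\<lambda>t. cis (c * t\<^sup>2))"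
  have c_eq: "2 * pi / lam / 2 * (1 / F - 1 / z) = c"
    unfolding c_def by simp
  have f_cont: "continuous_on A f" for A
    unfolding f_def by (intro continuous_intros)
  have antenna: "integral (ula_antenna lam N n)
      (\<lambda>(x, y). exp (\<i> * complex_of_real (2 * pi / lam * (x\<^sup>2 / (2 * F) + y\<^sup>2 / (2 * F))))
              * exp (- \<i> * complex_of_real (2 * pi / lam * (x\<^sup>2 / (2 * z) + y\<^sup>2 / (2 * z)))))
    = integral {- (real N * \<delta> / 2) + (real n - 1) * \<delta>..- (real N * \<delta> / 2) + real n * \<delta>} f
      * integral {- (\<delta> / 2)..\<delta> / 2} f" for n
    unfolding ula_antenna_eq_Times focused_phase_eq_cis \<delta>_def[symmetric] c_eq
    using integral_Times_mult[OF f_cont f_cont] by (simp add: f_def)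
  have "f integrable_on {- (real N * \<delta> / 2)..- (real N * \<delta> / 2) + real N * \<delta>}"
    by (intro integrable_continuous_real f_cont)
  from sum_integral_adjacent_intervals[OF this] assms(1)
  have array: "(\<Sum>n = 1..N. integral (ula_antenna lam N n)
      (\<lambda>(x, y). exp (\<i> * complex_of_real (2 * pi / lam * (x\<^sup>2 / (2 * F) + y\<^sup>2 / (2 * F))))
              * exp (- \<i> * complex_of_real (2 * pi / lam * (x\<^sup>2 / (2 * z) + y\<^sup>2 / (2 * z))))))
    = integral {- (real N * \<delta> / 2)..real N * \<delta> / 2} f * integral {- (\<delta> / 2)..\<delta> / 2} f"
    unfolding antenna sum_distrib_right[symmetric] by (simp add: \<delta>_def algebra_simps)
  show ?thesis
    unfolding G_ULA_def Let_def \<delta>_def[symmetric] array f_def norm_mult power_mult_distrib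
    by simp
qed

lemma G_ULA_eq_fresnel:
  fixes lam z F :: real
  assumes "0 < lam" and "0 < \<beta>" and chirp: "\<bar>pi / lam * (1 / F - 1 / z)\<bar> = pi * \<beta>\<^sup>2 / 2"
  defines "\<delta> \<equiv> lam / 2"
  shows "G_ULA lam N z F
    = 4 * ((fresnelC (\<beta> * (real N * \<delta> / 2)))\<^sup>2 + (fresnelS (\<beta> * (real N * \<delta> / 2)))\<^sup>2) / \<beta>\<^sup>2
      * (4 * ((fresnelC (\<beta> * (\<delta> / 2)))\<^sup>2 + (fresnelS (\<beta> * (\<delta> / 2)))\<^sup>2) / \<beta>\<^sup>2)
      / (real N * \<delta>\<^sup>2)\<^sup>2"
proof -
  have "0 \<le> real N * \<delta> / 2" and "0 \<le> \<delta> / 2"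
    unfolding \<delta>_def using assms(1) by simp_all
  from this[THEN norm_integral_cis_quadratic_symmetric[OF assms(2) chirp]] show ?thesis
    unfolding G_ULA_eq_norm_integrals[OF assms(1)] \<delta>_def[symmetric] by simp
qed

lemma abs_chirp_rate_eq:
  fixes lam z F :: real
  assumes "0 < lam" and "0 < z" and "0 < F"
  defines "a \<equiv> lam / (8 * (F * z / \<bar>F - z\<bar>))"
  shows "\<bar>pi / lam * (1 / F - 1 / z)\<bar> = pi * (4 * sqrt a / lam)\<^sup>2 / 2"
proof -
  have "pi / lam * (1 / F - 1 / z) = pi * (z - F) / (lam * F * z)"
    using assms by (simp add: field_simps)
  then have "\<bar>pi / lam * (1 / F - 1 / z)\<bar> = pi * \<bar>F - z\<bar> / (lam * F * z)"
    using assms by (simp add: abs_mult abs_minus_commute)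
  also have "\<dots> = pi * (16 * a / lam\<^sup>2) / 2"
    unfolding a_def using assms by (simp add: field_simps power2_eq_square)
  also have "16 * a / lam\<^sup>2 = (4 * sqrt a / lam)\<^sup>2"
    using assms unfolding a_def by (simp add: power_divide power_mult_distrib)
  finally show ?thesis .
qed

theorem theorem1:
  fixes lam z F :: real and N :: nat
  assumes "lam > 0" and "N \<ge> 1" and "z > 0" and "F > 0" and "z \<noteq> F"
  shows "let z_eff = F * z / \<bar>F - z\<bar>; a = lam / (8 * z_eff) in
         G_ULA lam N z F =
           ((fresnelC (sqrt a))\<^sup>2 + (fresnelS (sqrt a))\<^sup>2) *
           ((fresnelC (sqrt a * real N))\<^sup>2 + (fresnelS (sqrt a * real N))\<^sup>2) / (real N * a)\<^sup>2"
proof -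
  define a where "a = lam / (8 * (F * z / \<bar>F - z\<bar>))"
  define \<beta> where "\<beta> = 4 * sqrt a / lam"
  have "0 < a"
    unfolding a_def using assms by simp
  have chirp: "\<bar>pi / lam * (1 / F - 1 / z)\<bar> = pi * \<beta>\<^sup>2 / 2"
    unfolding \<beta>_def a_def using assms(1,3,4) by (rule abs_chirp_rate_eq)
  have "0 < \<beta>" and \<beta>_sq: "\<beta>\<^sup>2 = 16 * a / lam\<^sup>2"
    and array: "\<beta> * (real N * (lam / 2) / 2) = sqrt a * real N" and element: "\<beta> * (lam / 2 / 2) = sqrt a"
    unfolding \<beta>_def using \<open>0 < a\<close> assms(1) by (simp_all add: power_divide power_mult_distrib)
  note G_ULA_eq_fresnel[where N = N, OF assms(1) \<open>0 < \<beta>\<close> chirp, unfolded array element]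
  also have "4 * ((fresnelC (sqrt a * real N))\<^sup>2 + (fresnelS (sqrt a * real N))\<^sup>2) / \<beta>\<^sup>2
      * (4 * ((fresnelC (sqrt a))\<^sup>2 + (fresnelS (sqrt a))\<^sup>2) / \<beta>\<^sup>2) / (real N * (lam / 2)\<^sup>2)\<^sup>2
    = ((fresnelC (sqrt a))\<^sup>2 + (fresnelS (sqrt a))\<^sup>2) *
      ((fresnelC (sqrt a * real N))\<^sup>2 + (fresnelS (sqrt a * real N))\<^sup>2) / (real N * a)\<^sup>2"
    using assms(1,2) \<open>0 < a\<close> unfolding \<beta>_sq by (simp add: field_simps power2_eq_square)
  finally show ?thesis
    unfolding a_def Let_def .
qed

end
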